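(* Let $s,t$ be positive integers, $k,l$ nonnegative integers and $r$ a positive integer. Put $$a=\frac{l(s+t)+t}{s+t},\qquad b=\frac{k(s+t)+s}{s+t},$$ and define $$P(x)=\left(\frac{x-1}{2}\right)^{l(s+t)+t}\left(\frac{x+1}{2}\right)^{k(s+t)+s}J_{r-1}(a,b,x)^{s+t},\qquad Q(x)=J_{k+l+r}(-a,-b,x)^{s+t}.$$ Then $\deg(P-Q)\le m$, where $m=(k+l+r)(s+t-1)-r$.
   Context: For a nonnegative integer $N$ and complex parameters $\alpha,\beta$, the (generalized) Jacobi polynomial is $J_N(\alpha,\beta,x)=\sum_{j=0}^{N}\binom{N+\alpha+\beta+j}{j}\binom{N+\alpha}{N-j}\left(\frac{x-1}{2}\right)^j$, where $\binom{y}{j}=y(y-1)\cdots(y-j+1)/j!$ for arbitrary $y$. Here $a+b=k+l+1$. The polynomials $P,Q$ have degree $(s+t)(k+l+r)$, and $m$ is this degree minus $k+l+2r$; this is the Davenport–Zannier pair for the "even double brush" weighted tree (a chain with alternating edge weights $s,t$ and $r$ inner white vertices, with $k$ and $l$ leaves of weight $s+t$ attached at its two ends). *)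

theory Defs
  imports "HOL-Computational_Algebra.Polynomial" Complex_Main
begin

definition jacobi_poly :: "nat \<Rightarrow> complex \<Rightarrow> complex \<Rightarrow> complex poly" where
  "jacobi_poly N al be =
     (\<Sum>j=0..N. smult (((of_nat N + al + be + of_nat j) gchoose j) * ((of_nat N + al) gchoose (N - j)))
                       ([:-1/2, 1/2:] ^ j))"

end

theory Submission
  imports Defs
begin

text \<open>
  Put y = (x - 1)/2, n = s + t, A = n a and B = n b. Then P and Q become p = y^A (1 + y)^B J^n
  and q = G^n, where J and G are Jacobi polynomials of degrees r - 1 and k + l + r with
  parameters (a, b) and (-a, -b). As a + b = k + l + 1 is an integer, p and q have the same
  degree n (k + l + r) and the same leading coefficient. The eigenvalues of the differential
  equations of J and G differ by exactly a + b, which makes the twisted Wronskian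
  (a + (a + b) y) J G + y (1 + y) (J' G - J G') constant. The Wronskian p' q - p q' is
  n y^(A-1) (1 + y)^(B-1) (J G)^(n-1) times this constant, so its degree is small. On the other
  hand, for p \<noteq> q of equal degree e and equal leading coefficient, the Wronskian has degree
  at least deg (p - q) + e - 1.
\<close>

definition jacobi_coeff :: "nat \<Rightarrow> complex \<Rightarrow> complex \<Rightarrow> nat \<Rightarrow> complex" where
  "jacobi_coeff N al be j =
     (if j \<le> N then ((of_nat N + al + be + of_nat j) gchoose j) * ((of_nat N + al) gchoose (N - j))
      else 0)"

definition shifted_jacobi :: "nat \<Rightarrow> complex \<Rightarrow> complex \<Rightarrow> complex poly" where
  "shifted_jacobi N al be = (\<Sum>j\<le>N. monom (jacobi_coeff N al be j) j)"

lemma coeff_shifted_jacobi: "coeff (shifted_jacobi N al be) j = jacobi_coeff N al be j"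
  unfolding shifted_jacobi_def coeff_sum by (simp add: jacobi_coeff_def)

lemma pcompose_power: "(p ^ n) \<circ>\<^sub>p q = (p \<circ>\<^sub>p q) ^ n"
  by (induction n) (simp_all add: pcompose_mult pcompose_1)

lemma pcompose_monom: "monom c n \<circ>\<^sub>p q = smult c (q ^ n)"
  by (simp add: monom_altdef pcompose_smult pcompose_power pcompose_pCons)

lemma jacobi_poly_eq_pcompose:
  "jacobi_poly N al be = shifted_jacobi N al be \<circ>\<^sub>p [:-1/2, 1/2:]"
  unfolding jacobi_poly_def shifted_jacobi_def pcompose_sum pcompose_monom
  by (intro sum.cong) (auto simp: jacobi_coeff_def)

lemma degree_shifted_jacobi_le: "degree (shifted_jacobi N al be) \<le> N"
  by (rule degree_le) (simp add: coeff_shifted_jacobi jacobi_coeff_def)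

lemma coeff_shifted_jacobi_top:
  "coeff (shifted_jacobi N al be) N = (of_nat (2 * N) + al + be) gchoose N"
  by (simp add: coeff_shifted_jacobi jacobi_coeff_def algebra_simps)

lemma
  assumes "a + b = of_nat S"
  shows coeff_shifted_jacobi_dual_top:
      "coeff (shifted_jacobi M a b) M = of_nat ((2 * M + S) choose M)"
      "coeff (shifted_jacobi (M + S) (-a) (-b)) (M + S) = of_nat ((2 * M + S) choose M)"
    and degree_shifted_jacobi_dual:
      "degree (shifted_jacobi M a b) = M"
      "degree (shifted_jacobi (M + S) (-a) (-b)) = M + S"
proof -
  show top_J: "coeff (shifted_jacobi M a b) M = of_nat ((2 * M + S) choose M)"
    using assms by (simp add: coeff_shifted_jacobi_top add.assoc binomial_gbinomial)
  have "(of_nat (2 * (M + S)) + - a + - b :: complex) = of_nat (2 * M + S)"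
    using assms by (simp add: algebra_simps)
  then show top_G: "coeff (shifted_jacobi (M + S) (-a) (-b)) (M + S) = of_nat ((2 * M + S) choose M)"
    using binomial_symmetric[of M "2 * M + S"]
    by (simp only: coeff_shifted_jacobi_top binomial_gbinomial[symmetric]) simp
  show "degree (shifted_jacobi M a b) = M"
    by (intro antisym degree_shifted_jacobi_le le_degree) (simp add: top_J)
  show "degree (shifted_jacobi (M + S) (-a) (-b)) = M + S"
    by (intro antisym degree_shifted_jacobi_le le_degree) (simp add: top_G)
qed

lemma jacobi_coeff_Suc:
  "of_nat (Suc j) * (of_nat j + al + 1) * jacobi_coeff N al be (Suc j)
     = (of_nat N - of_nat j) * (of_nat N + of_nat j + al + be + 1) * jacobi_coeff N al be j"
proof (cases "j < N")
  case True
  define y where "y = of_nat N + al + be + of_nat j"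
  define z where "z = of_nat N + al"
  define m where "m = N - Suc j"
  have m: "N - j = Suc m" "N - Suc j = m" "of_nat N - of_nat j = (of_nat (Suc m) :: complex)"
    using True by (auto simp: m_def of_nat_diff)
  have z_m: "z - of_nat m = of_nat j + al + 1"
    using True by (simp add: z_def m_def of_nat_diff)
  have absorb_y: "of_nat (Suc j) * ((y + 1) gchoose Suc j) = (y + 1) * (y gchoose j)"
    using gbinomial_absorption[of j "y + 1"] by simp
  have absorb_z: "of_nat (Suc m) * (z gchoose Suc m) = (z - of_nat m) * (z gchoose m)"
    using gbinomial_absorption[of m z] gbinomial_absorb_comp[of z m] by simp
  have "of_nat (Suc j) * (of_nat j + al + 1) * jacobi_coeff N al be (Suc j)
      = (of_nat (Suc j) * ((y + 1) gchoose Suc j)) * (z gchoose m) * (of_nat j + al + 1)"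
    using True by (simp add: jacobi_coeff_def y_def z_def m add_ac)
  also have "\<dots> = (y + 1) * (y gchoose j) * (of_nat (Suc m) * (z gchoose Suc m))"
    unfolding z_m[symmetric] by (simp only: absorb_y absorb_z mult_ac)
  also have "\<dots> = (of_nat N - of_nat j) * (of_nat N + of_nat j + al + be + 1) * jacobi_coeff N al be j"
    using True by (simp add: jacobi_coeff_def y_def z_def m add_ac)
  finally show ?thesis .
next
  case False
  then show ?thesis
    by (cases "j = N") (auto simp: jacobi_coeff_def)
qed

text \<open>Up to sign, the Jacobi operator (1 - x^2) D^2 + (be - al - (al + be + 2) x) D in the
  variable y = (x - 1)/2.\<close>

definition jacobi_operator :: "complex \<Rightarrow> complex \<Rightarrow> complex poly \<Rightarrow> complex poly" where
  "jacobi_operator al be p = [:0, 1, 1:] * pderiv (pderiv p) + [:al + 1, al + be + 2:] * pderiv p"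

lemma coeff_jacobi_operator:
  "coeff (jacobi_operator al be p) j
     = of_nat (Suc j) * (of_nat j + al + 1) * coeff p (Suc j)
       + of_nat j * (of_nat j + al + be + 1) * coeff p j"
  by (cases j) (auto simp: jacobi_operator_def coeff_pderiv coeff_pCons algebra_simps split: nat.split)

lemma jacobi_operator_shifted_jacobi:
  "jacobi_operator al be (shifted_jacobi N al be)
     = smult (of_nat N * (of_nat N + al + be + 1)) (shifted_jacobi N al be)"
proof (rule poly_eqI)
  fix j
  have "coeff (jacobi_operator al be (shifted_jacobi N al be)) j
      = ((of_nat N - of_nat j) * (of_nat N + of_nat j + al + be + 1)
         + of_nat j * (of_nat j + al + be + 1)) * jacobi_coeff N al be j"
    unfolding coeff_jacobi_operator coeff_shifted_jacobi jacobi_coeff_Suc by (simp add: algebra_simps)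
  also have "\<dots> = of_nat N * (of_nat N + al + be + 1) * jacobi_coeff N al be j"
    by (simp add: algebra_simps)
  finally show "coeff (jacobi_operator al be (shifted_jacobi N al be)) j
      = coeff (smult (of_nat N * (of_nat N + al + be + 1)) (shifted_jacobi N al be)) j"
    by (simp add: coeff_shifted_jacobi)
qed

definition wronskian :: "'a::idom poly \<Rightarrow> 'a poly \<Rightarrow> 'a poly" where
  "wronskian p q = pderiv p * q - p * pderiv q"

lemma wronskian_diff_left: "wronskian (p - q) q = wronskian p q"
  by (simp add: wronskian_def pderiv_diff algebra_simps)

lemma coeff_pderiv_mult_top:
  fixes p q :: "'a::{idom, ring_char_0} poly"
  shows "coeff (pderiv p * q) (degree p + degree q - 1) = of_nat (degree p) * lead_coeff p * lead_coeff q"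
proof (cases "degree p = 0")
  case True
  then show ?thesis
    by (simp add: pderiv_eq_0_iff[THEN iffD2])
next
  case False
  then have "degree p + degree q - 1 = degree (pderiv p) + degree q"
    by (simp add: degree_pderiv)
  then have "coeff (pderiv p * q) (degree p + degree q - 1)
      = coeff (pderiv p) (degree (pderiv p)) * lead_coeff q"
    by (simp only: coeff_mult_degree_sum)
  also have "coeff (pderiv p) (degree (pderiv p)) = of_nat (degree p) * lead_coeff p"
    using False by (simp add: degree_pderiv coeff_pderiv)
  finally show ?thesis .
qed

text \<open>The coefficient of the Wronskian in degree deg (p - q) + deg q - 1 is
  (deg (p - q) - deg q) lc (p - q) lc q, which is nonzero.\<close>

lemma degree_diff_le_wronskian:
  fixes p q :: "'a::{idom, ring_char_0} poly"
  assumes deg: "degree p = degree q" and lead: "lead_coeff p = lead_coeff q" and "p \<noteq> q"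
  shows "degree (p - q) + degree q \<le> degree (wronskian p q) + 1"
proof -
  define d e c where defs: "d = degree (p - q)" "e = degree q" "c = lead_coeff (p - q)"
  have "c \<noteq> 0"
    unfolding defs using \<open>p \<noteq> q\<close> by (metis leading_coeff_0_iff right_minus_eq)
  have "d \<le> e"
    using degree_diff_le[of p e q] deg by (simp add: defs)
  moreover have "coeff (p - q) e = 0"
    using deg lead by (simp add: defs)
  ultimately have "d < e"
    using \<open>c \<noteq> 0\<close> by (metis defs(1,3) order.order_iff_strict)
  then have "lead_coeff q \<noteq> 0"
    by (cases "q = 0") (simp_all add: defs)
  have "coeff (wronskian p q) (d + e - 1)
      = coeff (pderiv (p - q) * q) (d + e - 1) - coeff (pderiv q * (p - q)) (e + d - 1)"
    unfolding wronskian_diff_left[of p q, symmetric]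
    unfolding wronskian_def coeff_diff by (simp only: mult.commute[of "p - q" "pderiv q"] add.commute[of e d])
  also have "\<dots> = (of_nat d - of_nat e) * c * lead_coeff q"
    unfolding defs coeff_pderiv_mult_top by (simp add: algebra_simps)
  finally have "coeff (wronskian p q) (d + e - 1) \<noteq> 0"
    using \<open>d < e\<close> \<open>c \<noteq> 0\<close> \<open>lead_coeff q \<noteq> 0\<close> by simp
  then have "d + e - 1 \<le> degree (wronskian p q)"
    by (rule le_degree)
  then show ?thesis
    by (simp add: defs)
qed

lemma wronskian_mult_power:
  "wronskian (f * J ^ Suc n) (G ^ Suc n)
     = J ^ n * G ^ n * (pderiv f * J * G + smult (of_nat (Suc n)) (f * wronskian J G))"
  unfolding wronskian_def pderiv_mult pderiv_power_Suc
  by (simp add: smult_diff_right algebra_simps)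

lemma pderiv_monomial_product:
  "pderiv ([:0, 1:] ^ Suc A * [:1, 1:] ^ Suc B :: 'a::idom poly)
     = [:0, 1:] ^ A * [:1, 1:] ^ B * [:of_nat (Suc A), of_nat (Suc A) + of_nat (Suc B):]"
  unfolding pderiv_mult pderiv_power_Suc
  by (simp add: pderiv_pCons smult_add_left[symmetric] algebra_simps)

text \<open>Up to the factor y^(a-1) (1 + y)^(b-1), the Wronskian of y^a (1 + y)^b J and G.\<close>

definition jacobi_wronskian :: "complex \<Rightarrow> complex \<Rightarrow> complex poly \<Rightarrow> complex poly \<Rightarrow> complex poly" where
  "jacobi_wronskian a b J G = [:a, a + b:] * J * G + [:0, 1, 1:] * wronskian J G"

lemma wronskian_power_product:
  assumes "of_nat (Suc A) = of_nat (Suc n) * a" and "of_nat (Suc B) = of_nat (Suc n) * b"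
  shows "wronskian ([:0, 1:] ^ Suc A * [:1, 1:] ^ Suc B * J ^ Suc n) (G ^ Suc n :: complex poly)
     = smult (of_nat (Suc n)) ([:0, 1:] ^ A * [:1, 1:] ^ B * J ^ n * G ^ n * jacobi_wronskian a b J G)"
proof -
  have "[:0, 1:] ^ Suc A * [:1, 1:] ^ Suc B
      = [:0, 1:] ^ A * [:1, 1:] ^ B * ([:0, 1:] * [:1, 1:] :: complex poly)"
    by (simp only: power_Suc mult_ac)
  also have "[:0, 1:] * [:1, 1:] = ([:0, 1, 1:] :: complex poly)"
    by simp
  finally have f: "[:0, 1:] ^ Suc A * [:1, 1:] ^ Suc B
      = [:0, 1:] ^ A * [:1, 1:] ^ B * ([:0, 1, 1:] :: complex poly)" .
  have c: "[:of_nat (Suc A), of_nat (Suc A) + of_nat (Suc B):] = smult (of_nat (Suc n)) [:a, a + b:]"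
    unfolding assms by (simp add: algebra_simps)
  have ring: "J ^ n * G ^ n * (U * smult m c * J * G + smult m (U * d * W))
      = smult m (U * J ^ n * G ^ n * (c * J * G + d * W))" for U c d W :: "complex poly" and m
    by (simp add: smult_add_right algebra_simps)
  show ?thesis
    unfolding wronskian_mult_power pderiv_monomial_product
    unfolding f c jacobi_wronskian_def by (rule ring)
qed

lemma degree_jacobi_wronskian:
  assumes J: "jacobi_operator a b J = smult lam J"
    and G: "jacobi_operator (-a) (-b) G = smult (lam + a + b) G"
  shows "degree (jacobi_wronskian a b J G) = 0"
proof -
  have "poly (pderiv (jacobi_wronskian a b J G)) x = 0" for x
  proof -
    define j0 j1 j2 g0 g1 g2 where vals: "j0 = poly J x" "j1 = poly (pderiv J) x"
      "j2 = poly (pderiv (pderiv J)) x" "g0 = poly G x" "g1 = poly (pderiv G) x"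
      "g2 = poly (pderiv (pderiv G)) x"
    have ode_J: "x * (1 + x) * j2 + (a + 1 + (a + b + 2) * x) * j1 = lam * j0"
      using arg_cong[OF J, of "\<lambda>p. poly p x"]
      by (simp add: jacobi_operator_def vals algebra_simps)
    have ode_G: "x * (1 + x) * g2 + (1 - a + (2 - a - b) * x) * g1 = (lam + a + b) * g0"
      using arg_cong[OF G, of "\<lambda>p. poly p x"]
      by (simp add: jacobi_operator_def vals algebra_simps)
    have "poly (pderiv (jacobi_wronskian a b J G)) x
      = (a + b) * j0 * g0 + (a + (a + b) * x) * (j1 * g0 + j0 * g1)
        + (1 + 2 * x) * (j1 * g0 - j0 * g1) + x * (1 + x) * (j2 * g0 - j0 * g2)"
      unfolding vals jacobi_wronskian_def wronskian_def
      by (simp add: pderiv_mult pderiv_add pderiv_diff pderiv_pCons pderiv_smult)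
        (simp add: algebra_simps)
    also have "\<dots> = g0 * (x * (1 + x) * j2 + (a + 1 + (a + b + 2) * x) * j1 - lam * j0)
        - j0 * (x * (1 + x) * g2 + (1 - a + (2 - a - b) * x) * g1 - (lam + a + b) * g0)"
      by (simp add: algebra_simps)
    finally show ?thesis
      by (simp add: ode_J ode_G)
  qed
  then have "pderiv (jacobi_wronskian a b J G) = 0"
    using poly_all_0_iff_0 by blast
  then show ?thesis
    by (simp add: pderiv_eq_0_iff)
qed

lemma degree_jacobi_wronskian_dual:
  assumes "a + b = of_nat S"
  shows "degree (jacobi_wronskian a b (shifted_jacobi M a b) (shifted_jacobi (M + S) (-a) (-b))) = 0"
proof (rule degree_jacobi_wronskian)
  have "of_nat (M + S) * (of_nat (M + S) + - a + - b + 1)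
      = of_nat M * (of_nat M + a + b + 1) + a + (b :: complex)"
    by (simp add: assms[symmetric] algebra_simps)
  then show "jacobi_operator (-a) (-b) (shifted_jacobi (M + S) (-a) (-b))
      = smult (of_nat M * (of_nat M + a + b + 1) + a + b) (shifted_jacobi (M + S) (-a) (-b))"
    by (simp only: jacobi_operator_shifted_jacobi)
qed (rule jacobi_operator_shifted_jacobi)

lemma degree_wronskian_power_product_le:
  assumes "of_nat (Suc A) = of_nat (Suc n) * a" and "of_nat (Suc B) = of_nat (Suc n) * b"
    and "degree (jacobi_wronskian a b J G) = 0" and "J \<noteq> 0" and "G \<noteq> 0"
  shows "degree (wronskian ([:0, 1:] ^ Suc A * [:1, 1:] ^ Suc B * J ^ Suc n) (G ^ Suc n))
      \<le> A + B + n * (degree J + degree G)"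
proof -
  have "degree (wronskian ([:0, 1:] ^ Suc A * [:1, 1:] ^ Suc B * J ^ Suc n) (G ^ Suc n))
      \<le> degree ([:0, 1:] ^ A * [:1, 1:] ^ B * J ^ n * G ^ n * jacobi_wronskian a b J G)"
    unfolding wronskian_power_product[OF assms(1,2)] by (rule degree_smult_le)
  also have "\<dots> \<le> degree ([:0, 1:] ^ A * [:1, 1:] ^ B * J ^ n * G ^ n :: complex poly)"
    using degree_mult_le[of _ "jacobi_wronskian a b J G"] assms(3) by simp
  also have "\<dots> = A + B + n * (degree J + degree G)"
    using assms(4,5) by (simp add: degree_mult_eq degree_power_eq degree_linear_power algebra_simps)
  finally show ?thesis .
qed

lemma degree_shifted_jacobi_power_diff:
  fixes a b :: complex and n A B M S :: nat
  assumes "2 \<le> n" and "0 < A" and "0 < B"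
    and a: "of_nat A = of_nat n * a" and b: "of_nat B = of_nat n * b" and ab: "a + b = of_nat S"
  shows "degree ([:0, 1:] ^ A * [:1, 1:] ^ B * shifted_jacobi M a b ^ n
           - shifted_jacobi (M + S) (-a) (-b) ^ n) + M + 1 \<le> (n - 1) * (M + S)"
proof -
  define n' A' B' where primes: "n' = n - 1" "A' = A - 1" "B' = B - 1"
  have n: "n = Suc n'" "1 \<le> n'" and A: "A = Suc A'" and B: "B = Suc B'"
    using assms(1-3) by (simp_all add: primes)
  define J G where JG: "J = shifted_jacobi M a b" "G = shifted_jacobi (M + S) (-a) (-b)"
  define p q where pq: "p = [:0, 1:] ^ A * [:1, 1:] ^ B * J ^ n" "q = G ^ n"
  have "of_nat (A + B) = (of_nat (n * S) :: complex)"
    using a b ab by (simp add: distrib_left[symmetric])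
  then have AB: "A + B = n * S"
    using of_nat_eq_iff by blast
  have deg_J: "degree J = M" and deg_G: "degree G = M + S" and "J \<noteq> 0" and "G \<noteq> 0"
    using degree_shifted_jacobi_dual[OF ab, of M] coeff_shifted_jacobi_dual_top[OF ab, of M]
    by (auto simp: JG)
  have deg_p: "degree p = n * (M + S)" and deg_q: "degree q = n * (M + S)"
    using \<open>J \<noteq> 0\<close> \<open>G \<noteq> 0\<close> AB
    by (simp_all add: pq degree_mult_eq degree_power_eq degree_linear_power deg_J deg_G algebra_simps)
  have lead: "lead_coeff p = lead_coeff q"
    using coeff_shifted_jacobi_dual_top[OF ab, of M]
    by (simp add: pq JG lead_coeff_mult lead_coeff_power degree_shifted_jacobi_dual[OF ab])
  have deg_wronskian: "degree (wronskian p q) \<le> A' + B' + n' * M + n' * (M + S)"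
    unfolding pq A B n
    using degree_wronskian_power_product_le[of A' n' a B' b J G] a b \<open>J \<noteq> 0\<close> \<open>G \<noteq> 0\<close>
      degree_jacobi_wronskian_dual[OF ab, of M, folded JG]
    by (simp add: A B n deg_J deg_G algebra_simps)
  have "0 < S"
    using AB \<open>0 < A\<close> by (cases S) auto
  moreover have "M + S \<le> n' * (M + S)"
    using mult_le_mono1[OF n(2), of "M + S"] by simp
  moreover have "n * (M + S) = n' * M + n' * S + M + S" "n * S = n' * S + S"
    "n' * (M + S) = n' * M + n' * S"
    using n by (simp_all add: algebra_simps)
  ultimately have "degree (p - q) + M + 1 \<le> n' * (M + S)"
    using degree_diff_le_wronskian[OF _ lead] deg_p deg_q deg_wronskian AB A B
    by (cases "p = q") auto
  then show ?thesis
    by (simp add: pq JG n)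
qed

theorem mainTheorem4:
  fixes s t k l r :: nat
  assumes "s > 0" and "t > 0" and "r > 0"
  defines "a \<equiv> (of_nat (l * (s + t) + t) / of_nat (s + t) :: complex)"
      and "b \<equiv> (of_nat (k * (s + t) + s) / of_nat (s + t) :: complex)"
  defines "P \<equiv> [:-1/2, 1/2:] ^ (l * (s + t) + t) * [:1/2, 1/2:] ^ (k * (s + t) + s)
                 * jacobi_poly (r - 1) a b ^ (s + t)"
      and "Q \<equiv> jacobi_poly (k + l + r) (-a) (-b) ^ (s + t)"
  shows "int (degree (P - Q)) \<le> int ((k + l + r) * (s + t - 1)) - int r"
proof -
  define n A B where nAB: "n = s + t" "A = l * (s + t) + t" "B = k * (s + t) + s"
  have "of_nat n \<noteq> (0 :: complex)"
    using assms(1) by (simp add: nAB del: of_nat_add)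
  then have a: "of_nat A = of_nat n * a" and b: "of_nat B = of_nat n * b"
    by (simp_all add: a_def b_def nAB)
  have "a + b = of_nat (n * (k + l + 1)) / of_nat n"
    by (simp add: a_def b_def nAB add_divide_distrib[symmetric] algebra_simps)
  with \<open>of_nat n \<noteq> 0\<close> have ab: "a + b = of_nat (k + l + 1)"
    by (metis of_nat_mult nonzero_mult_div_cancel_left)
  have k_l_r: "k + l + r = (r - 1) + (k + l + 1)"
    using assms(3) by simp
  have "P - Q = ([:0, 1:] ^ A * [:1, 1:] ^ B * shifted_jacobi (r - 1) a b ^ n
                 - shifted_jacobi ((r - 1) + (k + l + 1)) (-a) (-b) ^ n) \<circ>\<^sub>p [:-1/2, 1/2:]"
    unfolding P_def Q_def jacobi_poly_eq_pcompose k_l_r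
    by (simp add: nAB pcompose_diff pcompose_mult pcompose_power pcompose_pCons)
  moreover have "degree ([:0, 1:] ^ A * [:1, 1:] ^ B * shifted_jacobi (r - 1) a b ^ n
      - shifted_jacobi ((r - 1) + (k + l + 1)) (-a) (-b) ^ n) + (r - 1) + 1
      \<le> (n - 1) * ((r - 1) + (k + l + 1))"
    by (rule degree_shifted_jacobi_power_diff[OF _ _ _ a b ab]) (use assms(1-3) in \<open>simp_all add: nAB\<close>)
  ultimately have "degree (P - Q) + r \<le> (k + l + r) * (s + t - 1)"
    using k_l_r by (simp add: degree_pcompose nAB ac_simps)
  then show ?thesis
    by (metis le_diff_eq of_nat_add of_nat_le_iff)
qed

end
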